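(* For all odd integers $n\ge1$ and real numbers $a\ge1$, $x\in(0,\pi)$, we have $S^*_{n,a}(x)\ge\sin(x)$. Equality holds if and only if $n=1$.
   Context: For a real number $a$ and integers $0\le m$, $\binom{m+a}{m}=\frac{(a+1)(a+2)\cdots(a+m)}{m!}$ (equal to $1$ when $m=0$). For an integer $n\ge1$, $S^*_{n,a}(x)=\sum_{1\le j\le n,\ j\text{ odd}}\binom{n+a-j}{n-j}\sin(jx)$. *)

theory Defs
  imports Complex_Main
begin

text \<open>binom(m+a, m) = (a+1)(a+2)...(a+m)/m!, for real a and natural m.\<close>
definition binomr :: "nat \<Rightarrow> real \<Rightarrow> real" where
  "binomr m a = pochhammer (a + 1) m / fact m"

definition Sstar :: "nat \<Rightarrow> real \<Rightarrow> real \<Rightarrow> real" where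
  "Sstar n a x = (\<Sum>j\<in>{j\<in>{1..n}. odd j}. binomr (n - j) a * sin (real j * x))"

end

theory Submission
  imports Defs
begin

text \<open>
  Write \<open>n = 2M + 1\<close>, \<open>c k = binomr (2(M - k)) a\<close> and \<open>T k = sin (k x)\<^sup>2\<close>.
  Since \<open>sin x sin ((2k + 1) x) = T (k + 1) - T k\<close>, the product \<open>sin x S*(x)\<close> is
  \<open>\<Sum>k\<le>M. c k (T (k + 1) - T k)\<close>, and summation by parts shows that such a sum is
  nonnegative whenever the weights decrease to a nonnegative \<open>c M\<close>. For \<open>a \<ge> 1\<close>
  consecutive weights differ by at least 2 (Pascal's rule), so even \<open>c 0\<close> lowered by 2
  is admissible; this gives \<open>S*(x) \<ge> 2 sin x > sin x\<close> for \<open>n \<ge> 3\<close>, while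
  \<open>S*(x) = sin x\<close> for \<open>n = 1\<close>.
\<close>

lemma binomr_0 [simp]: "binomr 0 a = 1"
  by (simp add: binomr_def)

lemma binomr_Suc: "binomr (Suc m) a = binomr m a * (a + 1 + real m) / (real m + 1)"
  unfolding binomr_def by (simp add: pochhammer_Suc field_simps)

lemma binomr_pascal: "binomr (Suc m) a = binomr m a + binomr (Suc m) (a - 1)"
proof -
  have "binomr (Suc m) (a - 1) = binomr m a * a / (real m + 1)"
    unfolding binomr_def by (simp add: pochhammer_rec field_simps)
  then show ?thesis
    by (simp add: binomr_Suc field_simps)
qed

lemma binomr_ge_1:
  assumes "a \<ge> 0"
  shows "binomr m a \<ge> 1"
proof (induction m)
  case (Suc m)
  have "1 \<le> (a + 1 + real m) / (real m + 1)"
    using assms by simp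
  with Suc have "1 * 1 \<le> binomr m a * ((a + 1 + real m) / (real m + 1))"
    by (intro mult_mono) auto
  then show ?case
    by (simp add: binomr_Suc)
qed simp

lemma binomr_add_two_ge:
  assumes "a \<ge> 1"
  shows "binomr m a + 2 \<le> binomr (m + 2) a"
  using binomr_pascal[of m a] binomr_pascal[of "Suc m" a]
    binomr_ge_1[of "a - 1" "Suc m"] binomr_ge_1[of "a - 1" "Suc (Suc m)"] assms
  by simp

lemma sin_squared_diff: "sin (u::real) ^ 2 - sin v ^ 2 = sin (u + v) * sin (u - v)"
proof -
  have "(u + v) - (u - v) = 2 * v" "(u + v) + (u - v) = 2 * u"
    by simp_all
  then have "sin (u + v) * sin (u - v) = (cos (2 * v) - cos (2 * u)) / 2"
    by (simp only: sin_times_sin)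
  then show ?thesis
    by (simp only: cos_double_sin) simp
qed

lemma sum_by_parts:
  fixes b T :: "nat \<Rightarrow> 'a::comm_ring"
  shows "(\<Sum>k\<le>M. b k * (T (Suc k) - T k)) =
           b M * T (Suc M) + (\<Sum>k<M. (b k - b (Suc k)) * T (Suc k)) - b 0 * T 0"
  by (induction M) (simp_all add: algebra_simps)

lemma sum_by_parts_nonneg:
  fixes b T :: "nat \<Rightarrow> real"
  assumes "\<And>k. k < M \<Longrightarrow> b (Suc k) \<le> b k" and "0 \<le> b M"
    and "\<And>k. 0 \<le> T k" and "T 0 = 0"
  shows "0 \<le> (\<Sum>k\<le>M. b k * (T (Suc k) - T k))"
  unfolding sum_by_parts using assms
  by (auto intro!: add_nonneg_nonneg sum_nonneg mult_nonneg_nonneg)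

lemma Sstar_odd:
  "Sstar (2 * M + 1) a x = (\<Sum>k\<le>M. binomr (2 * (M - k)) a * sin (real (2 * k + 1) * x))"
proof -
  have odd_indices: "{j \<in> {1..2 * M + 1}. odd j} = (\<lambda>k. 2 * k + 1) ` {..M}"
    by (auto elim!: oddE)
  have "inj_on (\<lambda>k::nat. 2 * k + 1) {..M}"
    by (auto simp: inj_on_def)
  then show ?thesis
    unfolding Sstar_def odd_indices by (simp add: sum.reindex algebra_simps)
qed

lemma Sstar_1: "Sstar 1 a x = sin x"
  using Sstar_odd[of 0 a x] by simp

lemma sin_mult_Sstar_odd:
  "sin x * Sstar (2 * M + 1) a x =
     (\<Sum>k\<le>M. binomr (2 * (M - k)) a * (sin (real (Suc k) * x) ^ 2 - sin (real k * x) ^ 2))"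
proof -
  have "sin (real (Suc k) * x) ^ 2 - sin (real k * x) ^ 2 = sin x * sin (real (2 * k + 1) * x)" for k
    by (simp add: sin_squared_diff algebra_simps)
  then show ?thesis
    unfolding Sstar_odd sum_distrib_left by (simp add: ac_simps)
qed

lemma Sstar_odd_ge_twice_sin:
  assumes "a \<ge> 1" and "M > 0"
  shows "0 \<le> sin x * (Sstar (2 * M + 1) a x - 2 * sin x)"
proof -
  define c where "c k = binomr (2 * (M - k)) a" for k
  define T where "T k = sin (real k * x) ^ 2" for k
  define b where "b = c(0 := c 0 - 2)"
  have c_step: "c (Suc k) + 2 \<le> c k" if "k < M" for k
  proof -
    have "2 * (M - k) = 2 * (M - Suc k) + 2"
      using that by simp
    then show ?thesis
      using binomr_add_two_ge[OF assms(1), of "2 * (M - Suc k)"] by (simp add: c_def)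
  qed
  have "0 \<le> (\<Sum>k\<le>M. b k * (T (Suc k) - T k))"
  proof (rule sum_by_parts_nonneg)
    show "b (Suc k) \<le> b k" if "k < M" for k
      using c_step[OF that] by (auto simp: b_def)
    show "0 \<le> b M"
      using assms(2) by (simp add: b_def c_def)
    show "0 \<le> T k" "T 0 = 0" for k
      by (simp_all add: T_def)
  qed
  also have "\<dots> = (\<Sum>k\<le>M. c k * (T (Suc k) - T k)) - 2 * T 1"
    by (simp add: b_def T_def sum.atMost_shift algebra_simps)
  also have "\<dots> = sin x * Sstar (2 * M + 1) a x - 2 * sin x ^ 2"
    unfolding sin_mult_Sstar_odd c_def T_def by simp
  also have "\<dots> = sin x * (Sstar (2 * M + 1) a x - 2 * sin x)"
    by (simp add: algebra_simps power2_eq_square)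
  finally show ?thesis .
qed

theorem theorem3p5:
  fixes n :: nat and a x :: real
  assumes "odd n" and "n \<ge> 1" and "a \<ge> 1" and "0 < x" and "x < pi"
  shows "Sstar n a x \<ge> sin x \<and> (Sstar n a x = sin x \<longleftrightarrow> n = 1)"
proof -
  obtain M where n: "n = 2 * M + 1"
    using assms(1) by (auto elim!: oddE)
  have sin_pos: "sin x > 0"
    using assms by (simp add: sin_gt_zero)
  show ?thesis
  proof (cases "M = 0")
    case False
    then have "2 * sin x \<le> Sstar n a x"
      using Sstar_odd_ge_twice_sin[OF assms(3), of M x] sin_pos n
      by (simp add: zero_le_mult_iff)
    with sin_pos False n show ?thesis
      by simp
  next
    case True
    then have "n = 1"
      using n by simp
    then show ?thesis
      using Sstar_1[of a x] by simp
  qed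
qed

end
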